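(* Let $S$ be an intra-regular semigroup. Then every proper interior ideal $P$ of $S$ is semiprime, i.e. for every interior ideal $A$ of $S$, $A^{2}\subseteq P$ implies $A\subseteq P$.
   Context: A semigroup $S$ is intra-regular if $a\in Sa^{2}S$ for every $a\in S$. A subsemigroup $I$ of $S$ (non-empty with $II\subseteq I$) is an interior ideal if $SIS\subseteq I$. For a subset $A$, $A^{2}=AA=\{ab:a,b\in A\}$. *)

theory Defs
  imports Main
begin

text \<open>Semigroups are modelled via the type class semigroup_mult; S is the whole type.\<close>

definition set_prod :: "'a::semigroup_mult set \<Rightarrow> 'a set \<Rightarrow> 'a set" where
  "set_prod A B = {a * b | a b. a \<in> A \<and> b \<in> B}"

definition intra_regular :: "'a::semigroup_mult itself \<Rightarrow> bool" where
  "intra_regular _ \<longleftrightarrow> (\<forall>a::'a. a \<in> set_prod (set_prod UNIV {a * a}) UNIV)"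

definition interior_ideal :: "'a::semigroup_mult set \<Rightarrow> bool" where
  "interior_ideal I \<longleftrightarrow> I \<noteq> {} \<and> set_prod I I \<subseteq> I \<and> set_prod (set_prod UNIV I) UNIV \<subseteq> I"

end

theory Submission
  imports Defs
begin

(* Intra-regularity writes every a as x a\<^sup>2 y, so an interior ideal containing a\<^sup>2 contains a:
   interior ideals are even completely semiprime. *)

lemma mem_set_prod_iff: "c \<in> set_prod A B \<longleftrightarrow> (\<exists>a\<in>A. \<exists>b\<in>B. c = a * b)"
  unfolding set_prod_def by blast

lemma intra_regularE:
  fixes a :: "'a::semigroup_mult"
  assumes "intra_regular TYPE('a)"
  obtains x y where "a = x * (a * a) * y"
  using assms unfolding intra_regular_def set_prod_def by blast

lemma interior_ideal_mult_mem:
  assumes "interior_ideal I" and "p \<in> I"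
  shows "x * p * y \<in> I"
  using assms unfolding interior_ideal_def by (blast intro: mem_set_prod_iff[THEN iffD2])

lemma square_mem_set_prod_self:
  assumes "a \<in> A"
  shows "a * a \<in> set_prod A A"
  using assms mem_set_prod_iff by blast

lemma interior_ideal_completely_semiprime:
  fixes P :: "'a::semigroup_mult set"
  assumes "intra_regular TYPE('a)" and "interior_ideal P" and "a * a \<in> P"
  shows "a \<in> P"
proof -
  obtain x y where "a = x * (a * a) * y"
    using assms(1) by (rule intra_regularE)
  with interior_ideal_mult_mem[OF assms(2,3)] show ?thesis
    by metis
qed

theorem mainTheorem6:
  fixes P :: "'a::semigroup_mult set"
  assumes "intra_regular TYPE('a)"
    and "interior_ideal P" and "P \<noteq> UNIV"
  shows "\<forall>A. interior_ideal A \<longrightarrow> set_prod A A \<subseteq> P \<longrightarrow> A \<subseteq> P"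
proof (intro allI impI subsetI)
  fix A a
  assume "set_prod A A \<subseteq> P" and "a \<in> A"
  then have "a * a \<in> P"
    using square_mem_set_prod_self by blast
  with assms(1,2) show "a \<in> P"
    by (rule interior_ideal_completely_semiprime)
qed

end
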